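(* Let $\mu$ be a translation invariant probability measure on $\mathcal{X}=\mathbb{N}^{\mathbb{Z}^d}$ with $\mathbb{E}_\mu(\eta(0))=\rho<\infty$, and suppose $\mu$ is stabilizable. Then $\mathbb{E}_\mu(\eta_\infty(0))=\rho$. Moreover, if $\mu$ is a translation invariant probability measure on $\mathcal{X}$ with $\mathbb{E}_\mu(\eta(0))=\infty$, then $\mu$ is not stabilizable.
   Context: Height configurations are elements of $\mathcal{X}=\mathbb{N}^{\mathbb{Z}^d}$; $\eta$ is stable if $\eta(x)\le 2d-1$ for all $x$. Toppling matrix: $\Delta_{x,y}=2d\mathbf{1}_{x=y}-\mathbf{1}_{|x-y|=1}$. A toppling procedure is a measurable map $T:[0,\infty)\times\mathbb{Z}^d\times\mathcal{X}\to\mathbb{N}$ such that for every $\eta$: $T(0,x,\eta)=0$; $t\mapsto T(t,x,\eta)$ is right-continuous, nondecreasing, with jumps of size at most one and finitely many jumps in each finite time interval; and there is no infinite chain of topplings at sites $x_1,x_2,\dots$ at times $t_1>t_2>\cdots$ with $x_{i+1}$ a neighbor of $x_i$. With $\eta_t=\eta-\Delta T(t,\cdot,\eta)$, $T$ is legal if every toppling at a site $x$ at time $t$ has $\eta_{t-}(x)\ge 2d$; a legal $T$ is stabilizing for $\eta$ if $T(\infty,x,\eta)=\lim_{t\to\infty}T(t,x,\eta)<\infty$ for all $x$ and $\eta_\infty=\eta-\Delta T(\infty,\cdot,\eta)$ is stable. $\eta$ is stabilizable if some legal toppling procedure is stabilizing for it, and then $\eta_\infty$ does not depend on the stabilizing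 procedure. A probability measure $\mu$ on $\mathcal{X}$ is stabilizable if $\mu$-almost every $\eta$ is stabilizable. *)

theory Defs
  imports "HOL-Probability.Probability"
begin

text \<open>Sites of the lattice Z^d are functions 'd \<Rightarrow> int for a finite index type 'd
  (d = CARD('d)). Height configurations are functions site \<Rightarrow> nat.\<close>

type_synonym 'd site = "'d \<Rightarrow> int"
type_synonym 'd config = "'d site \<Rightarrow> nat"

definition origin :: "'d site" where
  "origin = (\<lambda>_. 0)"

definition nbr :: "('d::finite) site \<Rightarrow> 'd site \<Rightarrow> bool" where
  "nbr x y \<longleftrightarrow> (\<Sum>i\<in>UNIV. \<bar>x i - y i\<bar>) = 1"

definition config_space :: "('d::finite) config measure" where
  "config_space = PiM UNIV (\<lambda>_. count_space UNIV)"

definition shift :: "('d::finite) site \<Rightarrow> 'd config \<Rightarrow> 'd config" where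
  "shift a \<eta> = (\<lambda>x. \<eta> (\<lambda>i. x i + a i))"

definition transl_inv :: "('d::finite) config measure \<Rightarrow> bool" where
  "transl_inv \<mu> \<longleftrightarrow> (\<forall>a. distr \<mu> config_space (shift a) = \<mu>)"

definition stable :: "('d::finite) config \<Rightarrow> bool" where
  "stable \<eta> \<longleftrightarrow> (\<forall>x. \<eta> x \<le> 2 * CARD('d) - 1)"

type_synonym 'd procedure = "real \<Rightarrow> 'd site \<Rightarrow> 'd config \<Rightarrow> nat"

definition lap :: "(('d::finite) site \<Rightarrow> int) \<Rightarrow> 'd site \<Rightarrow> int" where
  "lap f x = 2 * int CARD('d) * f x - (\<Sum>y\<in>{y. nbr x y}. f y)"

definition lft :: "('d::finite) procedure \<Rightarrow> 'd site \<Rightarrow> 'd config \<Rightarrow> real \<Rightarrow> nat" where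
  "lft T x \<eta> t = Lim (at_left t) (\<lambda>s. T s x \<eta>)"

definition topples :: "('d::finite) procedure \<Rightarrow> 'd site \<Rightarrow> 'd config \<Rightarrow> real \<Rightarrow> bool" where
  "topples T x \<eta> t \<longleftrightarrow> t > 0 \<and> lft T x \<eta> t < T t x \<eta>"

definition toppling_proc :: "('d::finite) procedure \<Rightarrow> bool" where
  "toppling_proc T \<longleftrightarrow>
     (\<lambda>(t, x, \<eta>). T t x \<eta>) \<in> measurable
        (restrict_space borel {0::real..} \<Otimes>\<^sub>M (count_space UNIV \<Otimes>\<^sub>M config_space))
        (count_space UNIV) \<and>
     (\<forall>\<eta>. (\<forall>x. T 0 x \<eta> = 0) \<and>
        (\<forall>x. \<forall>t\<ge>0. continuous (at_right t) (\<lambda>s. T s x \<eta>)) \<and>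
        (\<forall>x. mono_on {0..} (\<lambda>s. T s x \<eta>)) \<and>
        (\<forall>x. \<forall>t>0. T t x \<eta> \<le> lft T x \<eta> t + 1) \<and>
        (\<forall>x. \<forall>b\<ge>0. finite {t\<in>{0..b}. topples T x \<eta> t}) \<and>
        \<not> (\<exists>xs ts. \<forall>i. topples T (xs i) \<eta> (ts i) \<and> ts (Suc i) < ts i
                         \<and> nbr (xs i) (xs (Suc i))))"

definition conf_at :: "('d::finite) procedure \<Rightarrow> 'd config \<Rightarrow> real \<Rightarrow> 'd site \<Rightarrow> int" where
  "conf_at T \<eta> t x = int (\<eta> x) - lap (\<lambda>y. int (T t y \<eta>)) x"

definition conf_before :: "('d::finite) procedure \<Rightarrow> 'd config \<Rightarrow> real \<Rightarrow> 'd site \<Rightarrow> int" where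
  "conf_before T \<eta> t x = int (\<eta> x) - lap (\<lambda>y. int (lft T y \<eta> t)) x"

definition legal :: "('d::finite) procedure \<Rightarrow> 'd config \<Rightarrow> bool" where
  "legal T \<eta> \<longleftrightarrow> (\<forall>x t. topples T x \<eta> t \<longrightarrow> conf_before T \<eta> t x \<ge> 2 * int CARD('d))"

definition T_inf :: "('d::finite) procedure \<Rightarrow> 'd site \<Rightarrow> 'd config \<Rightarrow> nat" where
  "T_inf T x \<eta> = Lim at_top (\<lambda>t. T t x \<eta>)"

definition final_conf :: "('d::finite) procedure \<Rightarrow> 'd config \<Rightarrow> 'd site \<Rightarrow> int" where
  "final_conf T \<eta> x = int (\<eta> x) - lap (\<lambda>y. int (T_inf T y \<eta>)) x"

definition stabilizing :: "('d::finite) procedure \<Rightarrow> 'd config \<Rightarrow> bool" where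
  "stabilizing T \<eta> \<longleftrightarrow> legal T \<eta> \<and>
     (\<forall>x. \<exists>n. ((\<lambda>t. T t x \<eta>) \<longlongrightarrow> n) at_top) \<and>
     (\<forall>x. final_conf T \<eta> x \<le> 2 * int CARD('d) - 1)"

definition stabilizable :: "('d::finite) config \<Rightarrow> bool" where
  "stabilizable \<eta> \<longleftrightarrow> (\<exists>T. toppling_proc T \<and> legal T \<eta> \<and> stabilizing T \<eta>)"

text \<open>eta_infinity (independent of the chosen stabilizing procedure).\<close>
definition stab :: "('d::finite) config \<Rightarrow> 'd site \<Rightarrow> int" where
  "stab \<eta> = final_conf (SOME T. toppling_proc T \<and> legal T \<eta> \<and> stabilizing T \<eta>) \<eta>"

definition stabilizable_measure :: "('d::finite) config measure \<Rightarrow> bool" where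
  "stabilizable_measure \<mu> \<longleftrightarrow> (AE \<eta> in \<mu>. stabilizable \<eta>)"

end

theory Submission
  imports Defs "HOL-Library.Function_Algebras"
begin

text \<open>
  Compare any stabilization with parallel toppling, where in every round each unstable site
  topples once. Its odometer \<open>u\<^sub>n\<close> never exceeds the final odometer of a legal stabilizing
  procedure, and conversely a legal procedure never topples more than an odometer whose toppled
  configuration is stable (least action principle). Hence \<open>u\<^sub>n\<close> increases to the final odometer
  and \<open>\<xi>\<^sub>n = \<eta> - \<Delta> u\<^sub>n\<close> is eventually equal to \<open>\<eta>\<^sub>\<infinity>\<close> at every site.

  Mass balance at the origin reads \<open>\<xi>\<^sub>n(0) + 2d u\<^sub>n(0) = \<eta>(0) + \<Sum>\<^sub>y u\<^sub>n(y)\<close>, summing over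
  the \<open>2d\<close> neighbours \<open>y\<close> of the origin. By translation invariance \<open>E u\<^sub>n(y) = E u\<^sub>n(0)\<close>,
  which is finite as \<open>u\<^sub>n \<le> n\<close>; so \<open>E \<xi>\<^sub>n(0) = \<rho>\<close> and \<open>E (4d - 1 + \<eta>(0) - \<xi>\<^sub>n(0)) = 4d - 1\<close>
  for every \<open>n\<close>. Both sequences are nonnegative and their limits add up to \<open>\<eta>(0) + 4d - 1\<close>,
  so Fatou's lemma applied to each of them forces \<open>E \<eta>\<^sub>\<infinity>(0) = \<rho>\<close>. Since \<open>\<eta>\<^sub>\<infinity>(0) \<le> 2d - 1\<close>,
  this also shows \<open>\<rho> < \<infinity>\<close> whenever \<open>\<mu>\<close> is stabilizable.
\<close>

section \<open>Neighbours and the toppling matrix\<close>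

lemma shift_apply: "shift a \<eta> x = \<eta> (x + a)"
  by (simp add: shift_def plus_fun_def)

lemma origin_eq_zero: "origin = 0"
  by (simp add: origin_def zero_fun_def)

lemma nbr_translate: "nbr (x + a) (y + a) \<longleftrightarrow> nbr x y"
  by (simp add: nbr_def)

definition lattice_step :: "('d::finite) site \<Rightarrow> 'd \<times> bool \<Rightarrow> 'd site" where
  "lattice_step x p = x(fst p := x (fst p) + (if snd p then 1 else -1))"

lemma sum_abs_diff_split:
  fixes x y :: "('d::finite) site"
  shows "(\<Sum>j\<in>UNIV. \<bar>x j - y j\<bar>) = \<bar>x i - y i\<bar> + (\<Sum>j\<in>UNIV-{i}. \<bar>x j - y j\<bar>)"
  by (simp add: sum.remove)

lemma nbr_lattice_step: "nbr x (lattice_step x p)"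
proof -
  obtain i b where p: "p = (i, b)" by (cases p)
  have "(\<Sum>j\<in>UNIV-{i}. \<bar>x j - lattice_step x p j\<bar>) = 0"
    by (rule sum.neutral) (simp add: p lattice_step_def)
  then show ?thesis
    unfolding nbr_def sum_abs_diff_split[of x _ i] by (simp add: p lattice_step_def)
qed

lemma nbr_imp_lattice_step:
  assumes "nbr x y"
  shows "\<exists>p. y = lattice_step x p"
proof -
  have sum1: "(\<Sum>j\<in>UNIV. \<bar>x j - y j\<bar>) = 1"
    using assms by (simp add: nbr_def)
  then obtain i where "x i \<noteq> y i"
    by (metis (no_types, lifting) abs_0 diff_self sum.neutral zero_neq_one)
  moreover have "(\<Sum>j\<in>UNIV-{i}. \<bar>x j - y j\<bar>) \<ge> 0"
    by (simp add: sum_nonneg)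
  ultimately have step: "\<bar>x i - y i\<bar> = 1" and rest: "(\<Sum>j\<in>UNIV-{i}. \<bar>x j - y j\<bar>) = 0"
    using sum1 unfolding sum_abs_diff_split[of x y i] by linarith+
  from rest have "y j = x j" if "j \<noteq> i" for j
    using that by (subst (asm) sum_nonneg_eq_0_iff) auto
  with step have "y = lattice_step x (i, y i = x i + 1)"
    by (auto simp: lattice_step_def fun_eq_iff)
  then show ?thesis ..
qed

lemma nbr_set_eq_range: "{y. nbr x y} = range (lattice_step x)"
  using nbr_imp_lattice_step nbr_lattice_step by blast

lemma inj_lattice_step: "inj (lattice_step x)"
proof (rule injI)
  fix p q assume eq: "lattice_step x p = lattice_step x q"
  obtain i b j c where p: "p = (i, b)" and q: "q = (j, c)" by (cases p, cases q)
  have "lattice_step x p i = lattice_step x q i" "lattice_step x p j = lattice_step x q j"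
    using eq by simp_all
  then show "p = q"
    unfolding p q lattice_step_def by (cases "i = j"; cases b; cases c) auto
qed

lemma finite_nbr [simp]: "finite {y. nbr (x::('d::finite) site) y}"
  unfolding nbr_set_eq_range by simp

lemma card_nbr: "card {y. nbr (x::('d::finite) site) y} = 2 * CARD('d)"
  unfolding nbr_set_eq_range by (simp add: card_image[OF inj_lattice_step] card_cartesian_product)

lemma nbr_set_translate: "{y. nbr (x + a) y} = (\<lambda>y. y + a) ` {y. nbr x y}"
proof (intro set_eqI iffI)
  fix z assume "z \<in> {y. nbr (x + a) y}"
  then have "nbr x (z - a)"
    using nbr_translate[of x a "z - a"] by simp
  then show "z \<in> (\<lambda>y. y + a) ` {y. nbr x y}"
    by (auto intro: image_eqI[of _ _ "z - a"])
qed (auto simp: nbr_translate)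

lemma lap_translate: "lap (\<lambda>y. f (y + a)) x = lap f (x + a)"
  unfolding lap_def nbr_set_translate by (simp add: sum.reindex inj_on_def)

definition toppled :: "('d::finite) config \<Rightarrow> ('d site \<Rightarrow> nat) \<Rightarrow> 'd site \<Rightarrow> int" where
  "toppled \<eta> v x = int (\<eta> x) - lap (\<lambda>y. int (v y)) x"

lemma toppled_expand:
  fixes \<eta> :: "('d::finite) config"
  shows "toppled \<eta> v x = int (\<eta> x) - 2 * int CARD('d) * int (v x) + (\<Sum>y\<in>{y. nbr x y}. int (v y))"
  by (simp add: toppled_def lap_def)

lemma toppled_translate: "toppled (shift a \<eta>) (\<lambda>y. v (y + a)) x = toppled \<eta> v (x + a)"
  using lap_translate[of "\<lambda>y. int (v y)" a x] by (simp add: toppled_def shift_apply)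

lemma toppled_cong:
  fixes \<eta> :: "('d::finite) config"
  assumes "v x = w x" and "\<And>y. nbr x y \<Longrightarrow> v y = w y"
  shows "toppled \<eta> v x = toppled \<eta> w x"
  using assms by (simp add: toppled_expand)

lemma toppled_antimono:
  fixes \<eta> :: "('d::finite) config"
  assumes "w x \<le> v x" and "\<And>y. nbr x y \<Longrightarrow> v y \<le> w y"
  shows "toppled \<eta> v x \<le> toppled \<eta> w x"
proof -
  have "(\<Sum>y\<in>{y. nbr x y}. int (v y)) \<le> (\<Sum>y\<in>{y. nbr x y}. int (w y))"
    using assms(2) by (intro sum_mono) simp
  moreover have "2 * int CARD('d) * int (w x) \<le> 2 * int CARD('d) * int (v x)"
    using assms(1) by (simp add: mult_left_mono)
  ultimately show ?thesis
    unfolding toppled_expand by linarith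
qed

lemma eventually_toppled_eq:
  assumes "\<And>y. eventually (\<lambda>n. v n y = w y) F"
  shows "eventually (\<lambda>n. toppled \<eta> (v n) x = toppled \<eta> w x) F"
proof -
  have "eventually (\<lambda>n. \<forall>y\<in>insert x {y. nbr x y}. v n y = w y) F"
    using assms by (intro eventually_ball_finite) auto
  then show ?thesis
    by eventually_elim (auto intro: toppled_cong)
qed

lemma final_conf_eq_toppled: "final_conf T \<eta> = toppled \<eta> (\<lambda>y. T_inf T y \<eta>)"
  by (simp add: fun_eq_iff final_conf_def toppled_def)

lemma conf_before_eq_toppled: "conf_before T \<eta> t = toppled \<eta> (\<lambda>y. lft T y \<eta> t)"
  by (simp add: fun_eq_iff conf_before_def toppled_def)

section \<open>Parallel toppling\<close>

primrec par_odometer :: "nat \<Rightarrow> ('d::finite) config \<Rightarrow> 'd site \<Rightarrow> nat" where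
  "par_odometer 0 \<eta> = (\<lambda>_. 0)"
| "par_odometer (Suc n) \<eta> = (\<lambda>x. par_odometer n \<eta> x +
     (if 2 * int CARD('d) \<le> toppled \<eta> (par_odometer n \<eta>) x then 1 else 0))"

lemma par_odometer_le: "par_odometer n \<eta> x \<le> n"
  by (induction n) (auto simp: le_SucI)

lemma incseq_par_odometer: "incseq (\<lambda>n. par_odometer n \<eta> x)"
  by (rule incseq_SucI) simp

text \<open>
  A site that is stable before a round gains at most one grain from each of its \<open>2d\<close>
  neighbours, whence the bound \<open>4d - 1\<close>; an unstable one loses \<open>2d\<close> grains and gains at most \<open>2d\<close>.
\<close>
lemma toppled_par_odometer_bounds:
  fixes \<eta> :: "('d::finite) config"
  shows "0 \<le> toppled \<eta> (par_odometer n \<eta>) x \<and>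
   toppled \<eta> (par_odometer n \<eta>) x \<le> max (int (\<eta> x)) (4 * int CARD('d) - 1)"
proof (induction n arbitrary: x)
  case 0
  then show ?case by (simp add: toppled_expand)
next
  case (Suc n)
  let ?unstable = "\<lambda>y. 2 * int CARD('d) \<le> toppled \<eta> (par_odometer n \<eta>) y"
  have step: "toppled \<eta> (par_odometer (Suc n) \<eta>) x = toppled \<eta> (par_odometer n \<eta>) x
      - 2 * int CARD('d) * (if ?unstable x then 1 else 0)
      + (\<Sum>y\<in>{y. nbr x y}. if ?unstable y then 1 else 0)"
  proof -
    have "int (par_odometer (Suc n) \<eta> y) = int (par_odometer n \<eta> y) + (if ?unstable y then 1 else 0)"
      for y
      by simp
    then show ?thesis
      by (simp only: toppled_expand sum.distrib) (simp add: algebra_simps)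
  qed
  have "(\<Sum>y\<in>{y. nbr x y}. if ?unstable y then 1 else 0) \<le> (\<Sum>y\<in>{y. nbr x y}. (1::int))"
    by (intro sum_mono) simp
  then have "(\<Sum>y\<in>{y. nbr x y}. if ?unstable y then 1 else 0) \<le> 2 * int CARD('d)"
    by (simp add: card_nbr)
  moreover have "0 \<le> (\<Sum>y\<in>{y. nbr x y}. if ?unstable y then 1 else (0::int))"
    by (intro sum_nonneg) simp
  ultimately show ?case
    using Suc.IH[of x] unfolding step by (cases "?unstable x") auto
qed

lemma par_odometer_shift: "par_odometer n (shift a \<eta>) = (\<lambda>x. par_odometer n \<eta> (x + a))"
proof (induction n)
  case (Suc n)
  show ?case by (simp only: par_odometer.simps Suc.IH toppled_translate)
qed simp

section \<open>The least action principle\<close>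

lemma left_limit_attained:
  fixes f :: "real \<Rightarrow> nat"
  assumes mono: "mono_on {0..} f" and "0 < t"
  obtains s where "0 \<le> s" "s < t" "\<And>r. s \<le> r \<Longrightarrow> r < t \<Longrightarrow> f r = f s"
    "Lim (at_left t) f = f s"
proof -
  have "f ` {0..<t} \<subseteq> {..f t}"
    using \<open>0 < t\<close> by (auto intro!: mono_onD[OF mono])
  then have fin: "finite (f ` {0..<t})"
    by (rule finite_subset) simp
  have "Max (f ` {0..<t}) \<in> f ` {0..<t}"
    using fin \<open>0 < t\<close> by (intro Max_in) auto
  then obtain s where s: "s \<in> {0..<t}" "f s = Max (f ` {0..<t})"
    by (auto simp del: atLeastLessThan_iff)
  have const: "f r = f s" if "s \<le> r" "r < t" for r
  proof (rule antisym)
    show "f r \<le> f s"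
      unfolding s(2) using fin that s(1) by (intro Max_ge) auto
    show "f s \<le> f r"
      using that s by (intro mono_onD[OF mono]) auto
  qed
  have "eventually (\<lambda>r. r \<in> {s<..<t}) (at_left t)"
    using s by (intro eventually_at_left_real) auto
  then have "eventually (\<lambda>r. f r = f s) (at_left t)"
    by eventually_elim (auto intro: const)
  then have "Lim (at_left t) f = f s"
    by (rule tendsto_Lim[OF trivial_limit_at_left_real tendsto_eventually])
  then show ?thesis
    using that[OF _ _ const] s(1) by auto
qed

lemma first_jump_above:
  fixes f :: "real \<Rightarrow> nat"
  assumes mono: "mono_on {0..} f"
    and right_cont: "\<And>t. 0 \<le> t \<Longrightarrow> continuous (at_right t) f"
    and jumps: "\<And>t. 0 < t \<Longrightarrow> f t \<le> Lim (at_left t) f + 1"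
    and "f 0 \<le> c" "0 \<le> s" "c < f s"
  obtains t where "0 < t" "t \<le> s" "Lim (at_left t) f = c" "f t = c + 1"
proof -
  define A where "A = {r. 0 \<le> r \<and> c < f r}"
  define t where "t = Inf A"
  have "s \<in> A" and bdd: "bdd_below A"
    using assms by (auto simp: A_def bdd_below_def)
  then have "A \<noteq> {}" "t \<le> s"
    unfolding t_def by (auto intro: cInf_lower)
  have "0 \<le> t"
    unfolding t_def using \<open>A \<noteq> {}\<close> by (intro cInf_greatest) (auto simp: A_def)
  have below: "f r \<le> c" if "0 \<le> r" "r < t" for r
    using that cInf_lower[OF _ bdd, of r] by (force simp: A_def t_def)
  have above: "c < f t"
  proof (rule ccontr)
    assume not_above: "\<not> c < f t"
    have "(f \<longlongrightarrow> f t) (at_right t)"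
      using right_cont[OF \<open>0 \<le> t\<close>] by (simp add: continuous_within)
    then have "eventually (\<lambda>r. f r = f t) (at_right t)"
      by (simp add: tendsto_discrete)
    then obtain b where "t < b" and flat: "\<And>r. t < r \<Longrightarrow> r < b \<Longrightarrow> f r = f t"
      by (auto simp: eventually_at_right_field)
    then obtain a where "a \<in> A" "a < b"
      using cInf_less_iff[OF \<open>A \<noteq> {}\<close> bdd] unfolding t_def by auto
    moreover have "t \<le> a"
      unfolding t_def using \<open>a \<in> A\<close> bdd by (rule cInf_lower)
    ultimately have "f a = f t"
      using flat by (cases "a = t") auto
    with \<open>a \<in> A\<close> not_above show False
      by (simp add: A_def)
  qed
  with assms(4) have "0 < t"
    using \<open>0 \<le> t\<close> by (cases "t = 0") auto
  then obtain r where "0 \<le> r" "r < t" "Lim (at_left t) f = f r"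
    using left_limit_attained[OF mono] by blast
  moreover have "f t \<le> Lim (at_left t) f + 1"
    using jumps[OF \<open>0 < t\<close>] .
  ultimately have "Lim (at_left t) f = c" "f t = c + 1"
    using below[of r] above by linarith+
  with \<open>0 < t\<close> \<open>t \<le> s\<close> that show ?thesis
    by blast
qed

lemma overshooting_nbr:
  fixes \<eta> :: "('d::finite) config"
  assumes "legal T \<eta>" "topples T x \<eta> t" "v x \<le> lft T x \<eta> t"
    and "toppled \<eta> v x \<le> 2 * int CARD('d) - 1"
  shows "\<exists>y. nbr x y \<and> v y < lft T y \<eta> t"
proof (rule ccontr)
  assume "\<not> ?thesis"
  then have "toppled \<eta> (\<lambda>y. lft T y \<eta> t) x \<le> toppled \<eta> v x"
    using assms(3) by (intro toppled_antimono) auto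
  moreover have "2 * int CARD('d) \<le> toppled \<eta> (\<lambda>y. lft T y \<eta> t) x"
    using assms(1,2) by (simp add: legal_def conf_before_eq_toppled)
  ultimately show False
    using assms(4) by linarith
qed

lemma toppling_procD:
  assumes "toppling_proc T"
  shows "T 0 x \<eta> = 0"
    and "0 \<le> t \<Longrightarrow> continuous (at_right t) (\<lambda>s. T s x \<eta>)"
    and "mono_on {0..} (\<lambda>s. T s x \<eta>)"
    and "0 < t \<Longrightarrow> T t x \<eta> \<le> lft T x \<eta> t + 1"
    and "\<not> (\<exists>xs ts. \<forall>i. topples T (xs i) \<eta> (ts i) \<and> ts (Suc i) < ts i \<and> nbr (xs i) (xs (Suc i)))"
  using assms by (simp_all add: toppling_proc_def)

lemma toppling_first_exceeding:
  assumes T: "toppling_proc T" and "0 \<le> r" and "c < T r y \<eta>"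
  obtains t where "t \<le> r" "topples T y \<eta> t" "lft T y \<eta> t = c"
proof -
  have "T 0 y \<eta> \<le> c"
    by (simp add: toppling_procD(1)[OF T])
  with assms obtain t where "0 < t" "t \<le> r" "Lim (at_left t) (\<lambda>s. T s y \<eta>) = c" "T t y \<eta> = c + 1"
    using first_jump_above[where f="\<lambda>s. T s y \<eta>", OF toppling_procD(3)[OF T] toppling_procD(2)[OF T]
        toppling_procD(4)[OF T, unfolded lft_def]] by blast
  with that show ?thesis
    unfolding topples_def lft_def by auto
qed

text \<open>
  Call a toppling at \<open>x\<close> that takes \<open>T\<close> beyond \<open>v x\<close> an overshoot. Legality at an overshoot,
  together with stability of \<open>\<eta> - \<Delta> v\<close>, forces some neighbour to have overshot strictly earlier;
  iterating produces the infinite backward chain of topplings that toppling procedures exclude.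
\<close>
theorem legal_toppling_le_stable_odometer:
  fixes \<eta> :: "('d::finite) config"
  assumes T: "toppling_proc T" and legal: "legal T \<eta>"
    and stable: "\<And>x. toppled \<eta> v x \<le> 2 * int CARD('d) - 1" and "0 \<le> s"
  shows "T s x \<eta> \<le> v x"
proof (rule ccontr)
  assume "\<not> ?thesis"
  define overshoot where
    "overshoot p \<longleftrightarrow> topples T (fst p) \<eta> (snd p) \<and> lft T (fst p) \<eta> (snd p) = v (fst p)"
    for p :: "'d site \<times> real"
  have descent: "\<exists>q. overshoot q \<and> nbr (fst p) (fst q) \<and> snd q < snd p" if "overshoot p" for p
  proof -
    obtain x t where p: "p = (x, t)"
      by (cases p)
    with that have "topples T x \<eta> t" "v x \<le> lft T x \<eta> t" "0 < t"
      by (auto simp: overshoot_def topples_def)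
    then obtain y where "nbr x y" "v y < lft T y \<eta> t"
      using overshooting_nbr[OF legal _ _ stable] by blast
    moreover obtain r where "0 \<le> r" "r < t" "Lim (at_left t) (\<lambda>s. T s y \<eta>) = T r y \<eta>"
      using left_limit_attained[OF toppling_procD(3)[OF T] \<open>0 < t\<close>] by blast
    ultimately have "v y < T r y \<eta>"
      by (simp add: lft_def)
    then obtain t' where "t' \<le> r" "topples T y \<eta> t'" "lft T y \<eta> t' = v y"
      by (rule toppling_first_exceeding[OF T \<open>0 \<le> r\<close>])
    with \<open>nbr x y\<close> \<open>r < t\<close> show ?thesis
      unfolding p by (intro exI[of _ "(y, t')"]) (auto simp: overshoot_def)
  qed
  from \<open>\<not> T s x \<eta> \<le> v x\<close> have "v x < T s x \<eta>"
    by simp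
  then obtain t where "t \<le> s" "topples T x \<eta> t" "lft T x \<eta> t = v x"
    by (rule toppling_first_exceeding[OF T \<open>0 \<le> s\<close>])
  then have "\<exists>p. overshoot p"
    by (intro exI[of _ "(x, t)"]) (simp add: overshoot_def)
  then obtain f where
    "\<forall>i. overshoot (f i) \<and> nbr (fst (f i)) (fst (f (Suc i))) \<and> snd (f (Suc i)) < snd (f i)"
    using dependent_nat_choice[of "\<lambda>_. overshoot" "\<lambda>_ p q. nbr (fst p) (fst q) \<and> snd q < snd p",
        OF _ descent]
    by blast
  then have "\<exists>xs ts. \<forall>i. topples T (xs i) \<eta> (ts i) \<and> ts (Suc i) < ts i \<and> nbr (xs i) (xs (Suc i))"
    by (intro exI[of _ "\<lambda>i. fst (f i)"] exI[of _ "\<lambda>i. snd (f i)"]) (auto simp: overshoot_def)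
  with toppling_procD(5)[OF T] show False
    by contradiction
qed

section \<open>Convergence of parallel toppling\<close>

lemma incseq_bounded_eventually_const:
  fixes f :: "nat \<Rightarrow> nat"
  assumes "incseq f" and "\<And>n. f n \<le> B"
  shows "\<exists>c. eventually (\<lambda>n. f n = c) sequentially"
proof -
  have fin: "finite (range f)"
    by (rule finite_subset[of _ "{..B}"]) (use assms(2) in auto)
  then have "Max (range f) \<in> range f"
    by (intro Max_in) auto
  then obtain N where N: "Max (range f) = f N"
    by blast
  have "f n = f N" if "N \<le> n" for n
  proof (rule antisym)
    show "f n \<le> f N"
      unfolding N[symmetric] using fin by (intro Max_ge) auto
    show "f N \<le> f n"
      using incseqD[OF assms(1) that] .
  qed
  then show ?thesis
    unfolding eventually_sequentially by blast
qed

lemma eventually_T_eq_T_inf: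
  assumes "stabilizing T \<eta>"
  shows "eventually (\<lambda>t. T t x \<eta> = T_inf T x \<eta>) at_top"
proof -
  obtain m where m: "((\<lambda>t. T t x \<eta>) \<longlongrightarrow> m) at_top"
    using assms by (auto simp: stabilizing_def)
  then have "T_inf T x \<eta> = m"
    unfolding T_inf_def by (rule tendsto_Lim[rotated]) simp
  with m show ?thesis
    by (simp add: tendsto_discrete)
qed

lemma par_odometer_le_T_inf:
  fixes \<eta> :: "('d::finite) config"
  assumes "stabilizing T \<eta>"
  shows "par_odometer n \<eta> x \<le> T_inf T x \<eta>"
proof (induction n arbitrary: x)
  case (Suc n)
  show ?case
  proof (cases "par_odometer n \<eta> x = T_inf T x \<eta>")
    case True
    then have "toppled \<eta> (par_odometer n \<eta>) x \<le> toppled \<eta> (\<lambda>y. T_inf T y \<eta>) x"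
      using Suc.IH by (intro toppled_antimono) auto
    also have "\<dots> \<le> 2 * int CARD('d) - 1"
      using assms by (simp add: stabilizing_def final_conf_eq_toppled)
    finally show ?thesis
      using True by simp
  next
    case False
    with Suc.IH[of x] show ?thesis
      by simp
  qed
qed simp

lemma eventually_par_odometer_eq_T_inf:
  fixes \<eta> :: "('d::finite) config"
  assumes T: "toppling_proc T" "legal T \<eta>" "stabilizing T \<eta>"
  shows "eventually (\<lambda>n. par_odometer n \<eta> x = T_inf T x \<eta>) sequentially"
proof -
  have "\<forall>x. \<exists>c. eventually (\<lambda>n. par_odometer n \<eta> x = c) sequentially"
    using incseq_bounded_eventually_const[OF incseq_par_odometer par_odometer_le_T_inf[OF T(3)]]
    by blast
  then obtain V where V: "\<And>x. eventually (\<lambda>n. par_odometer n \<eta> x = V x) sequentially"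
    by metis
  have V_le: "V x \<le> T_inf T x \<eta>" for x
  proof -
    obtain n where "par_odometer n \<eta> x = V x"
      using eventually_happens'[OF sequentially_bot V] by blast
    then show ?thesis
      using par_odometer_le_T_inf[OF T(3)] by metis
  qed
  \<comment> \<open>once \<open>u\<^sub>n\<close> has settled around \<open>x\<close>, an unstable \<open>x\<close> would topple again in the next round\<close>
  have V_stable: "toppled \<eta> V x \<le> 2 * int CARD('d) - 1" for x
  proof (rule ccontr)
    assume unstable: "\<not> ?thesis"
    have "eventually (\<lambda>n. False) sequentially"
      using V[of x] eventually_sequentially_Suc[THEN iffD2, OF V[of x]]
        eventually_toppled_eq[where v="\<lambda>n. par_odometer n \<eta>" and \<eta>=\<eta> and x=x, OF V]
      by eventually_elim (use unstable in simp)
    then show False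
      by simp
  qed
  have "T_inf T x \<eta> \<le> V x" for x
  proof -
    obtain t where "0 \<le> t" "T t x \<eta> = T_inf T x \<eta>"
      using eventually_happens'[OF trivial_limit_at_top_linorder
          eventually_conj[OF eventually_ge_at_top eventually_T_eq_T_inf[OF T(3)]]] by blast
    then show ?thesis
      using legal_toppling_le_stable_odometer[OF T(1,2) V_stable] by metis
  qed
  with V_le have "V x = T_inf T x \<eta>"
    by (simp add: antisym)
  with V[of x] show ?thesis
    by simp
qed

lemma stab_eq_final_conf:
  assumes "stabilizable \<eta>"
  obtains T where "toppling_proc T" "legal T \<eta>" "stabilizing T \<eta>" "stab \<eta> = final_conf T \<eta>"
  using someI_ex[OF assms[unfolded stabilizable_def]] unfolding stab_def by blast

lemma eventually_par_config_eq_stab: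
  fixes \<eta> :: "('d::finite) config"
  assumes "stabilizable \<eta>"
  shows "eventually (\<lambda>n. toppled \<eta> (par_odometer n \<eta>) x = stab \<eta> x) sequentially"
proof -
  obtain T where T: "toppling_proc T" "legal T \<eta>" "stabilizing T \<eta>" "stab \<eta> = final_conf T \<eta>"
    using assms by (rule stab_eq_final_conf)
  show ?thesis
    unfolding T(4) final_conf_eq_toppled
    by (rule eventually_toppled_eq) (rule eventually_par_odometer_eq_T_inf[OF T(1-3)])
qed

lemma stab_bounds:
  fixes \<eta> :: "('d::finite) config"
  assumes "stabilizable \<eta>"
  shows "0 \<le> stab \<eta> x" and "stab \<eta> x \<le> 2 * int CARD('d) - 1"
proof -
  obtain n where "toppled \<eta> (par_odometer n \<eta>) x = stab \<eta> x"
    using eventually_happens'[OF sequentially_bot eventually_par_config_eq_stab[OF assms]] by blast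
  then show "0 \<le> stab \<eta> x"
    using toppled_par_odometer_bounds[of \<eta> n x] by simp
  obtain T where "stabilizing T \<eta>" "stab \<eta> = final_conf T \<eta>"
    using assms by (rule stab_eq_final_conf)
  then show "stab \<eta> x \<le> 2 * int CARD('d) - 1"
    by (simp add: stabilizing_def)
qed

section \<open>Expectations under translation invariant measures\<close>

lemma measurable_height [measurable]: "(\<lambda>\<eta>. \<eta> x) \<in> measurable config_space (count_space UNIV)"
  unfolding config_space_def by (rule measurable_component_singleton) simp

lemma measurable_toppled:
  fixes v :: "('d::finite) config \<Rightarrow> 'd site \<Rightarrow> nat"
  assumes [measurable]: "\<And>y. (\<lambda>\<eta>. real (v \<eta> y)) \<in> borel_measurable config_space"
  shows "(\<lambda>\<eta>. real_of_int (toppled \<eta> (v \<eta>) x)) \<in> borel_measurable config_space"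
proof -
  have "(\<lambda>\<eta>. real_of_int (toppled \<eta> (v \<eta>) x)) =
      (\<lambda>\<eta>. real (\<eta> x) - 2 * real CARD('d) * real (v \<eta> x) + (\<Sum>y\<in>{y. nbr x y}. real (v \<eta> y)))"
    by (simp add: fun_eq_iff toppled_expand)
  then show ?thesis
    by simp
qed

lemma measurable_par_odometer [measurable]:
  "(\<lambda>\<eta>. real (par_odometer n \<eta> x)) \<in> borel_measurable (config_space :: ('d::finite) config measure)"
proof (induction n arbitrary: x)
  case (Suc n)
  note [measurable] = Suc.IH measurable_toppled[where v="par_odometer n", OF Suc.IH]
  have "(\<lambda>\<eta>. real (par_odometer (Suc n) \<eta> x)) = (\<lambda>\<eta>. real (par_odometer n \<eta> x) +
      (if 2 * real CARD('d) \<le> real_of_int (toppled \<eta> (par_odometer n \<eta>) x) then 1 else 0))"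
    by (auto simp: fun_eq_iff)
  then show ?case
    by simp
qed simp

lemma measurable_par_config [measurable]:
  "(\<lambda>\<eta>. real_of_int (toppled \<eta> (par_odometer n \<eta>) x))
    \<in> borel_measurable (config_space :: ('d::finite) config measure)"
  by (rule measurable_toppled) (rule measurable_par_odometer)

lemma measurable_shift: "shift a \<in> measurable config_space (config_space :: ('d::finite) config measure)"
  unfolding config_space_def shift_def
  by (rule measurable_PiM_single') (auto intro: measurable_component_singleton)

lemma nn_integral_cancel:
  fixes f g h k :: "'a \<Rightarrow> real"
  assumes [measurable]: "f \<in> borel_measurable M" "g \<in> borel_measurable M"
    "h \<in> borel_measurable M" "k \<in> borel_measurable M"
    and nonneg: "\<And>x. 0 \<le> f x" "\<And>x. 0 \<le> g x" "\<And>x. 0 \<le> h x" "\<And>x. 0 \<le> k x"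
    and balance: "\<And>x. f x + g x = h x + k x"
    and same: "(\<integral>\<^sup>+x. ennreal (g x) \<partial>M) = (\<integral>\<^sup>+x. ennreal (k x) \<partial>M)"
    and k_finite: "(\<integral>\<^sup>+x. ennreal (k x) \<partial>M) \<noteq> \<infinity>"
  shows "(\<integral>\<^sup>+x. ennreal (f x) \<partial>M) = (\<integral>\<^sup>+x. ennreal (h x) \<partial>M)"
proof -
  have "(\<integral>\<^sup>+x. ennreal (f x) \<partial>M) + (\<integral>\<^sup>+x. ennreal (g x) \<partial>M) = (\<integral>\<^sup>+x. ennreal (f x) + ennreal (g x) \<partial>M)"
    by (simp add: nn_integral_add)
  also have "\<dots> = (\<integral>\<^sup>+x. ennreal (h x) + ennreal (k x) \<partial>M)"
    using nonneg by (simp add: balance flip: ennreal_plus)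
  also have "\<dots> = (\<integral>\<^sup>+x. ennreal (h x) \<partial>M) + (\<integral>\<^sup>+x. ennreal (k x) \<partial>M)"
    by (simp add: nn_integral_add)
  finally show ?thesis
    using same k_finite by (metis add.commute ennreal_add_left_cancel)
qed

text \<open>
  Fatou's lemma bounds both liminf integrals; since the limits add up to \<open>h + g\<close> and \<open>\<integral>g\<close> is
  finite, the bound for \<open>a\<close> cannot be strict.
\<close>
lemma nn_integral_liminf_eq:
  fixes a b :: "nat \<Rightarrow> 'a \<Rightarrow> ennreal"
  assumes [measurable]: "\<And>n. a n \<in> borel_measurable M" "\<And>n. b n \<in> borel_measurable M"
    "h \<in> borel_measurable M" "g \<in> borel_measurable M"
    and int_a: "\<And>n. (\<integral>\<^sup>+x. a n x \<partial>M) = (\<integral>\<^sup>+x. h x \<partial>M)"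
    and int_b: "\<And>n. (\<integral>\<^sup>+x. b n x \<partial>M) = (\<integral>\<^sup>+x. g x \<partial>M)"
    and g_finite: "(\<integral>\<^sup>+x. g x \<partial>M) \<noteq> \<infinity>"
    and limits: "AE x in M. liminf (\<lambda>n. a n x) + liminf (\<lambda>n. b n x) = h x + g x"
  shows "(\<integral>\<^sup>+x. liminf (\<lambda>n. a n x) \<partial>M) = (\<integral>\<^sup>+x. h x \<partial>M)"
proof (rule antisym)
  show "(\<integral>\<^sup>+x. liminf (\<lambda>n. a n x) \<partial>M) \<le> (\<integral>\<^sup>+x. h x \<partial>M)"
    using nn_integral_liminf[of a M] by (simp add: int_a Liminf_const)
  have le_g: "(\<integral>\<^sup>+x. liminf (\<lambda>n. b n x) \<partial>M) \<le> (\<integral>\<^sup>+x. g x \<partial>M)"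
    using nn_integral_liminf[of b M] by (simp add: int_b Liminf_const)
  have "(\<integral>\<^sup>+x. h x \<partial>M) + (\<integral>\<^sup>+x. g x \<partial>M) = (\<integral>\<^sup>+x. h x + g x \<partial>M)"
    by (simp add: nn_integral_add)
  also have "\<dots> = (\<integral>\<^sup>+x. liminf (\<lambda>n. a n x) + liminf (\<lambda>n. b n x) \<partial>M)"
    using limits by (intro nn_integral_cong_AE) auto
  also have "\<dots> = (\<integral>\<^sup>+x. liminf (\<lambda>n. a n x) \<partial>M) + (\<integral>\<^sup>+x. liminf (\<lambda>n. b n x) \<partial>M)"
    by (simp add: nn_integral_add)
  also have "\<dots> \<le> (\<integral>\<^sup>+x. liminf (\<lambda>n. a n x) \<partial>M) + (\<integral>\<^sup>+x. g x \<partial>M)"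
    using le_g by (rule add_left_mono)
  finally show "(\<integral>\<^sup>+x. h x \<partial>M) \<le> (\<integral>\<^sup>+x. liminf (\<lambda>n. a n x) \<partial>M)"
    using g_finite by (metis add.commute ennreal_add_left_cancel_le)
qed

locale transl_inv_prob_space = prob_space \<mu> for \<mu> :: "('d::finite) config measure" +
  assumes sets_eq [measurable_cong]: "sets \<mu> = sets config_space"
    and transl_inv: "transl_inv \<mu>"
begin

lemma nn_integral_shift:
  assumes [measurable]: "f \<in> borel_measurable config_space"
  shows "(\<integral>\<^sup>+\<eta>. f (shift a \<eta>) \<partial>\<mu>) = (\<integral>\<^sup>+\<eta>. f \<eta> \<partial>\<mu>)"
proof -
  have [measurable]: "shift a \<in> measurable \<mu> config_space"
    using measurable_shift by (simp add: measurable_cong_sets[OF sets_eq refl])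
  have "(\<integral>\<^sup>+\<eta>. f (shift a \<eta>) \<partial>\<mu>) = (\<integral>\<^sup>+\<eta>. f \<eta> \<partial>distr \<mu> config_space (shift a))"
    by (simp add: nn_integral_distr)
  also have "distr \<mu> config_space (shift a) = \<mu>"
    using transl_inv by (simp add: transl_inv_def)
  finally show ?thesis .
qed

lemma nn_integral_nbr_sum_covariant:
  fixes f :: "('d::finite) config \<Rightarrow> 'd site \<Rightarrow> real"
  assumes [measurable]: "\<And>y. (\<lambda>\<eta>. f \<eta> y) \<in> borel_measurable config_space"
    and nonneg: "\<And>\<eta> y. 0 \<le> f \<eta> y"
    and covariant: "\<And>a \<eta> y. f (shift a \<eta>) y = f \<eta> (y + a)"
  shows "(\<integral>\<^sup>+\<eta>. ennreal (\<Sum>y\<in>{y. nbr origin y}. f \<eta> y) \<partial>\<mu>) =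
    (\<integral>\<^sup>+\<eta>. ennreal (2 * real CARD('d) * f \<eta> origin) \<partial>\<mu>)"
proof -
  have same: "(\<integral>\<^sup>+\<eta>. ennreal (f \<eta> y) \<partial>\<mu>) = (\<integral>\<^sup>+\<eta>. ennreal (f \<eta> origin) \<partial>\<mu>)" for y
    using nn_integral_shift[of "\<lambda>\<eta>. ennreal (f \<eta> origin)" y]
    by (simp add: covariant origin_eq_zero)
  have "(\<integral>\<^sup>+\<eta>. ennreal (\<Sum>y\<in>{y. nbr origin y}. f \<eta> y) \<partial>\<mu>) =
      (\<Sum>y\<in>{y. nbr origin y}. \<integral>\<^sup>+\<eta>. ennreal (f \<eta> y) \<partial>\<mu>)"
    using nonneg by (simp add: nn_integral_sum flip: sum_ennreal)
  also have "\<dots> = (\<Sum>y\<in>{y::'d site. nbr origin y}. \<integral>\<^sup>+\<eta>. ennreal (f \<eta> origin) \<partial>\<mu>)"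
    by (rule sum.cong[OF refl same])
  also have "\<dots> = of_nat (2 * CARD('d)) * (\<integral>\<^sup>+\<eta>. ennreal (f \<eta> origin) \<partial>\<mu>)"
    by (simp add: card_nbr)
  also have "\<dots> = (\<integral>\<^sup>+\<eta>. ennreal (2 * real CARD('d) * f \<eta> origin) \<partial>\<mu>)"
    using nonneg by (simp add: nn_integral_cmult ennreal_mult ennreal_of_nat_eq_real_of_nat)
  finally show ?thesis .
qed

lemma nn_integral_par_odometer_flux:
  "(\<integral>\<^sup>+\<eta>. ennreal (\<Sum>y\<in>{y. nbr origin y}. real (par_odometer n \<eta> y)) \<partial>\<mu>) =
    (\<integral>\<^sup>+\<eta>. ennreal (2 * real CARD('d) * real (par_odometer n \<eta> origin)) \<partial>\<mu>)"
  by (rule nn_integral_nbr_sum_covariant) (simp_all add: par_odometer_shift)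

lemma nn_integral_par_odometer_finite:
  "(\<integral>\<^sup>+\<eta>. ennreal (2 * real CARD('d) * real (par_odometer n \<eta> origin)) \<partial>\<mu>) \<noteq> \<infinity>"
proof -
  have "(\<integral>\<^sup>+\<eta>. ennreal (2 * real CARD('d) * real (par_odometer n \<eta> origin)) \<partial>\<mu>)
      \<le> (\<integral>\<^sup>+\<eta>. ennreal (2 * real CARD('d) * real n) \<partial>\<mu>)"
    by (intro nn_integral_mono ennreal_leI mult_left_mono) (simp_all add: par_odometer_le)
  also have "\<dots> = ennreal (2 * real CARD('d) * real n)"
    by (simp add: emeasure_space_1)
  finally show ?thesis
    using neq_top_trans by force
qed

lemma nn_integral_par_config:
  "(\<integral>\<^sup>+\<eta>. ennreal (real_of_int (toppled \<eta> (par_odometer n \<eta>) origin)) \<partial>\<mu>) =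
    (\<integral>\<^sup>+\<eta>. ennreal (real (\<eta> origin)) \<partial>\<mu>)"
proof (rule nn_integral_cancel[where g="\<lambda>\<eta>. 2 * real CARD('d) * real (par_odometer n \<eta> origin)"
      and k="\<lambda>\<eta>. \<Sum>y\<in>{y. nbr origin y}. real (par_odometer n \<eta> y)"])
  show "0 \<le> real_of_int (toppled \<eta> (par_odometer n \<eta>) origin)" for \<eta> :: "'d config"
    using toppled_par_odometer_bounds[of \<eta> n origin] by simp
  show "real_of_int (toppled \<eta> (par_odometer n \<eta>) origin) + 2 * real CARD('d) * real (par_odometer n \<eta> origin)
      = real (\<eta> origin) + (\<Sum>y\<in>{y. nbr origin y}. real (par_odometer n \<eta> y))" for \<eta> :: "'d config"
    by (simp add: toppled_expand)
qed (use nn_integral_par_odometer_finite in \<open>simp_all add: nn_integral_par_odometer_flux sum_nonneg\<close>)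

lemma nn_integral_par_slack:
  "(\<integral>\<^sup>+\<eta>. ennreal (4 * real CARD('d) - 1 + real (\<eta> origin)
      - real_of_int (toppled \<eta> (par_odometer n \<eta>) origin)) \<partial>\<mu>) = ennreal (4 * real CARD('d) - 1)"
proof -
  have card_ge: "1 \<le> real CARD('d)"
    by (simp add: Suc_le_eq)
  have "(\<integral>\<^sup>+\<eta>. ennreal (4 * real CARD('d) - 1 + real (\<eta> origin)
      - real_of_int (toppled \<eta> (par_odometer n \<eta>) origin)) \<partial>\<mu>) = (\<integral>\<^sup>+\<eta>. ennreal (4 * real CARD('d) - 1) \<partial>\<mu>)"
  proof (rule nn_integral_cancel[where g="\<lambda>\<eta>. \<Sum>y\<in>{y. nbr origin y}. real (par_odometer n \<eta> y)"
        and k="\<lambda>\<eta>. 2 * real CARD('d) * real (par_odometer n \<eta> origin)"])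
    show "0 \<le> 4 * real CARD('d) - 1 + real (\<eta> origin) - real_of_int (toppled \<eta> (par_odometer n \<eta>) origin)"
      for \<eta> :: "'d config"
      using toppled_par_odometer_bounds[of \<eta> n origin] card_ge by linarith
    show "0 \<le> 4 * real CARD('d) - 1"
      using card_ge by linarith
    show "4 * real CARD('d) - 1 + real (\<eta> origin) - real_of_int (toppled \<eta> (par_odometer n \<eta>) origin)
        + (\<Sum>y\<in>{y. nbr origin y}. real (par_odometer n \<eta> y))
      = 4 * real CARD('d) - 1 + 2 * real CARD('d) * real (par_odometer n \<eta> origin)" for \<eta> :: "'d config"
      by (simp add: toppled_expand)
  qed (use nn_integral_par_odometer_finite in \<open>simp_all add: nn_integral_par_odometer_flux sum_nonneg\<close>)
  then show ?thesis
    by (simp add: emeasure_space_1)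
qed

lemma nn_integral_stab:
  assumes "stabilizable_measure \<mu>"
  shows "(\<integral>\<^sup>+\<eta>. ennreal (real_of_int (stab \<eta> origin)) \<partial>\<mu>) = (\<integral>\<^sup>+\<eta>. ennreal (real (\<eta> origin)) \<partial>\<mu>)"
proof -
  \<comment> \<open>\<open>\<xi>\<^sub>n \<le> max \<eta> (4d - 1)\<close>, so \<open>C + \<eta> - \<xi>\<^sub>n\<close> is a nonnegative sequence as well\<close>
  define C where "C = 4 * real CARD('d) - 1"
  define \<xi> where "\<xi> n \<eta> = real_of_int (toppled \<eta> (par_odometer n \<eta>) origin)" for n and \<eta> :: "'d config"
  have [measurable]: "\<xi> n \<in> borel_measurable \<mu>" for n
    unfolding \<xi>_def by measurable
  have limits: "liminf (\<lambda>n. ennreal (\<xi> n \<eta>)) = ennreal (real_of_int (stab \<eta> origin))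
      \<and> liminf (\<lambda>n. ennreal (C + real (\<eta> origin) - \<xi> n \<eta>))
        = ennreal (C + real (\<eta> origin) - real_of_int (stab \<eta> origin))"
    if "stabilizable \<eta>" for \<eta> :: "'d config"
  proof -
    have "eventually (\<lambda>n. \<xi> n \<eta> = real_of_int (stab \<eta> origin)) sequentially"
      using eventually_par_config_eq_stab[OF that] unfolding \<xi>_def by eventually_elim simp
    then show ?thesis
      by (intro conjI lim_imp_Liminf tendsto_eventually sequentially_bot)
        (auto elim: eventually_mono)
  qed
  have sum_limits:
    "ennreal (real_of_int (stab \<eta> origin)) + ennreal (C + real (\<eta> origin) - real_of_int (stab \<eta> origin))
      = ennreal (real (\<eta> origin)) + ennreal C"
    if "stabilizable \<eta>" for \<eta> :: "'d config"
  proof -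
    have "0 \<le> stab \<eta> origin" "stab \<eta> origin \<le> 2 * int CARD('d) - 1"
      using stab_bounds[OF that] by auto
    then have "0 \<le> real_of_int (stab \<eta> origin)" "real_of_int (stab \<eta> origin) \<le> C"
      unfolding C_def by linarith+
    then show ?thesis
      by (simp flip: ennreal_plus add: C_def)
  qed
  have "(\<integral>\<^sup>+\<eta>. liminf (\<lambda>n. ennreal (\<xi> n \<eta>)) \<partial>\<mu>) = (\<integral>\<^sup>+\<eta>. ennreal (real (\<eta> origin)) \<partial>\<mu>)"
  proof (rule nn_integral_liminf_eq[where b="\<lambda>n \<eta>. ennreal (C + real (\<eta> origin) - \<xi> n \<eta>)"
        and g="\<lambda>_. ennreal C"])
    show "AE \<eta> in \<mu>. liminf (\<lambda>n. ennreal (\<xi> n \<eta>)) + liminf (\<lambda>n. ennreal (C + real (\<eta> origin) - \<xi> n \<eta>))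
        = ennreal (real (\<eta> origin)) + ennreal C"
      using assms unfolding stabilizable_measure_def by eventually_elim (simp add: limits sum_limits)
  qed (simp_all add: \<xi>_def C_def nn_integral_par_config nn_integral_par_slack emeasure_space_1)
  moreover have "(\<integral>\<^sup>+\<eta>. ennreal (real_of_int (stab \<eta> origin)) \<partial>\<mu>) = (\<integral>\<^sup>+\<eta>. liminf (\<lambda>n. ennreal (\<xi> n \<eta>)) \<partial>\<mu>)"
    using assms unfolding stabilizable_measure_def by (intro nn_integral_cong_AE) (auto simp: limits)
  ultimately show ?thesis
    by simp
qed

lemma nn_integral_stab_le:
  assumes "stabilizable_measure \<mu>"
  shows "(\<integral>\<^sup>+\<eta>. ennreal (real_of_int (stab \<eta> origin)) \<partial>\<mu>) \<le> ennreal (2 * real CARD('d) - 1)"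
proof -
  have "AE \<eta> in \<mu>. ennreal (real_of_int (stab \<eta> origin)) \<le> ennreal (2 * real CARD('d) - 1)"
    using assms unfolding stabilizable_measure_def
  proof eventually_elim
    case (elim \<eta>)
    then have "stab \<eta> origin \<le> 2 * int CARD('d) - 1"
      by (rule stab_bounds(2))
    then show ?case
      by (intro ennreal_leI) linarith
  qed
  then have "(\<integral>\<^sup>+\<eta>. ennreal (real_of_int (stab \<eta> origin)) \<partial>\<mu>) \<le> (\<integral>\<^sup>+\<eta>. ennreal (2 * real CARD('d) - 1) \<partial>\<mu>)"
    by (rule nn_integral_mono_AE)
  then show ?thesis
    by (simp add: emeasure_space_1)
qed

end

theorem lemma2p10:
  fixes \<mu> :: "(('d::finite) config) measure"
  assumes "prob_space \<mu>" and "sets \<mu> = sets config_space" and "transl_inv \<mu>"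
  shows "((\<integral>\<^sup>+ \<eta>. of_nat (\<eta> origin) \<partial>\<mu>) < \<infinity> \<and> stabilizable_measure \<mu> \<longrightarrow>
            (\<integral>\<^sup>+ \<eta>. ennreal (real_of_int (stab \<eta> origin)) \<partial>\<mu>) = (\<integral>\<^sup>+ \<eta>. of_nat (\<eta> origin) \<partial>\<mu>))
       \<and> ((\<integral>\<^sup>+ \<eta>. of_nat (\<eta> origin) \<partial>\<mu>) = \<infinity> \<longrightarrow> \<not> stabilizable_measure \<mu>)"
proof -
  interpret transl_inv_prob_space \<mu>
    using assms by (intro transl_inv_prob_space.intro transl_inv_prob_space_axioms.intro)
  have height_as_real: "(\<integral>\<^sup>+ \<eta>. of_nat (\<eta> origin) \<partial>\<mu>) = (\<integral>\<^sup>+ \<eta>. ennreal (real (\<eta> origin)) \<partial>\<mu>)"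
    by (simp add: ennreal_of_nat_eq_real_of_nat)
  have "(\<integral>\<^sup>+ \<eta>. of_nat (\<eta> origin) \<partial>\<mu>) < \<infinity>" if "stabilizable_measure \<mu>"
    using nn_integral_stab_le[OF that] nn_integral_stab[OF that] height_as_real
    by (simp add: le_less_trans[OF _ ennreal_less_top])
  then show ?thesis
    using nn_integral_stab height_as_real by auto
qed

end
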